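(* Let $V$ be a mixed lattice vector space and $p$ a mixed-monotone seminorm on $V$. Then $q(x)=p(s(x))$ defines a mixed lattice seminorm on $V$. If $p$ is a mixed-monotone norm, then $q$ is a mixed lattice norm.
   Context: A mixed lattice vector space $(V,\le,\preccurlyeq)$ is a real vector space $V$ with two partial orderings $\le$ (initial order) and $\preccurlyeq$ (specific order), each making $V$ a partially ordered vector space, with positive cones $V_p=\{x:0\le x\}$, $V_{sp}=\{x:0\preccurlyeq x\}$, such that: (1) for all $x,y$ the elements $x\curlyvee y=\min\{w: w\succcurlyeq x,\ w\ge y\}$ and $x\curlywedge y=\max\{w: w\preccurlyeq x,\ w\le y\}$ exist (min/max with respect to $\le$); (2) $x\preccurlyeq y$ implies $x\le y$; (3) $x\curlyvee y, x\curlywedge y\in V_{sp}$ whenever $x,y\in V_{sp}$. Notation: $x^u=0\curlyvee x$, $x^l=0\curlyvee(-x)$, $s(x)=x^u+x^l$. A seminorm (norm) $p$ is mixed-monotone if $0\preccurlyeq x\le y$ implies $p(x)\le p(y)$, and is a mixed lattice seminorm (norm) if $s(x)\le s(y)$ implies $p(x)\le p(y)$. *)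

theory Defs
  imports Main "HOL-Analysis.Analysis"
begin

definition partially_ordered_vs :: "('a::real_vector \<Rightarrow> 'a \<Rightarrow> bool) \<Rightarrow> bool" where
  "partially_ordered_vs le \<longleftrightarrow>
     (\<forall>x. le x x) \<and>
     (\<forall>x y. le x y \<and> le y x \<longrightarrow> x = y) \<and>
     (\<forall>x y z. le x y \<and> le y z \<longrightarrow> le x z) \<and>
     (\<forall>x y z. le x y \<longrightarrow> le (x + z) (y + z)) \<and>
     (\<forall>x y (c::real). le x y \<and> 0 \<le> c \<longrightarrow> le (c *\<^sub>R x) (c *\<^sub>R y))"

definition is_least_wrt :: "('a \<Rightarrow> 'a \<Rightarrow> bool) \<Rightarrow> 'a set \<Rightarrow> 'a \<Rightarrow> bool" where
  "is_least_wrt le S w \<longleftrightarrow> w \<in> S \<and> (\<forall>v\<in>S. le w v)"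

definition is_greatest_wrt :: "('a \<Rightarrow> 'a \<Rightarrow> bool) \<Rightarrow> 'a set \<Rightarrow> 'a \<Rightarrow> bool" where
  "is_greatest_wrt le S w \<longleftrightarrow> w \<in> S \<and> (\<forall>v\<in>S. le v w)"

definition mixed_upper :: "('a \<Rightarrow> 'a \<Rightarrow> bool) \<Rightarrow> ('a \<Rightarrow> 'a \<Rightarrow> bool) \<Rightarrow> 'a \<Rightarrow> 'a \<Rightarrow> 'a" where
  "mixed_upper le sle x y = (THE w. is_least_wrt le {w. sle x w \<and> le y w} w)"

definition mixed_lower :: "('a \<Rightarrow> 'a \<Rightarrow> bool) \<Rightarrow> ('a \<Rightarrow> 'a \<Rightarrow> bool) \<Rightarrow> 'a \<Rightarrow> 'a \<Rightarrow> 'a" where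
  "mixed_lower le sle x y = (THE w. is_greatest_wrt le {w. sle w x \<and> le w y} w)"

definition mixed_lattice_vs ::
  "('a::real_vector \<Rightarrow> 'a \<Rightarrow> bool) \<Rightarrow> ('a \<Rightarrow> 'a \<Rightarrow> bool) \<Rightarrow> bool" where
  "mixed_lattice_vs le sle \<longleftrightarrow>
     partially_ordered_vs le \<and> partially_ordered_vs sle \<and>
     (\<forall>x y. \<exists>w. is_least_wrt le {w. sle x w \<and> le y w} w) \<and>
     (\<forall>x y. \<exists>w. is_greatest_wrt le {w. sle w x \<and> le w y} w) \<and>
     (\<forall>x y. sle x y \<longrightarrow> le x y) \<and>
     (\<forall>x y. sle 0 x \<and> sle 0 y \<longrightarrow>
        sle 0 (mixed_upper le sle x y) \<and> sle 0 (mixed_lower le sle x y))"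

definition upper_part :: "('a::real_vector \<Rightarrow> 'a \<Rightarrow> bool) \<Rightarrow> ('a \<Rightarrow> 'a \<Rightarrow> bool) \<Rightarrow> 'a \<Rightarrow> 'a" where
  "upper_part le sle x = mixed_upper le sle 0 x"

definition lower_part :: "('a::real_vector \<Rightarrow> 'a \<Rightarrow> bool) \<Rightarrow> ('a \<Rightarrow> 'a \<Rightarrow> bool) \<Rightarrow> 'a \<Rightarrow> 'a" where
  "lower_part le sle x = mixed_upper le sle 0 (- x)"

definition sabs :: "('a::real_vector \<Rightarrow> 'a \<Rightarrow> bool) \<Rightarrow> ('a \<Rightarrow> 'a \<Rightarrow> bool) \<Rightarrow> 'a \<Rightarrow> 'a" where
  "sabs le sle x = upper_part le sle x + lower_part le sle x"

definition is_seminorm :: "('a::real_vector \<Rightarrow> real) \<Rightarrow> bool" where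
  "is_seminorm p \<longleftrightarrow> (\<forall>x y. p (x + y) \<le> p x + p y) \<and> (\<forall>x (c::real). p (c *\<^sub>R x) = \<bar>c\<bar> * p x)"

definition is_norm_fun :: "('a::real_vector \<Rightarrow> real) \<Rightarrow> bool" where
  "is_norm_fun p \<longleftrightarrow> is_seminorm p \<and> (\<forall>x. p x = 0 \<longrightarrow> x = 0)"

definition mixed_monotone :: "('a \<Rightarrow> 'a \<Rightarrow> bool) \<Rightarrow> ('a \<Rightarrow> 'a \<Rightarrow> bool) \<Rightarrow> ('a::real_vector \<Rightarrow> real) \<Rightarrow> bool" where
  "mixed_monotone le sle p \<longleftrightarrow> (\<forall>x y. sle 0 x \<and> le x y \<longrightarrow> p x \<le> p y)"

definition mixed_lattice_seminorm :: "('a \<Rightarrow> 'a \<Rightarrow> bool) \<Rightarrow> ('a \<Rightarrow> 'a \<Rightarrow> bool) \<Rightarrow> ('a::real_vector \<Rightarrow> real) \<Rightarrow> bool" where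
  "mixed_lattice_seminorm le sle p \<longleftrightarrow> is_seminorm p \<and>
     (\<forall>x y. le (sabs le sle x) (sabs le sle y) \<longrightarrow> p x \<le> p y)"

definition mixed_lattice_norm :: "('a \<Rightarrow> 'a \<Rightarrow> bool) \<Rightarrow> ('a \<Rightarrow> 'a \<Rightarrow> bool) \<Rightarrow> ('a::real_vector \<Rightarrow> real) \<Rightarrow> bool" where
  "mixed_lattice_norm le sle p \<longleftrightarrow> is_norm_fun p \<and>
     (\<forall>x y. le (sabs le sle x) (sabs le sle y) \<longrightarrow> p x \<le> p y)"

end

theory Submission
  imports Defs
begin

text \<open>The map \<open>s\<close> is positively homogeneous, even, subadditive for the initial order and takes
  values in the specific positive cone, and \<open>s x = 0\<close> forces \<open>x = 0\<close>. Composing a mixed-monotone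
  seminorm with \<open>s\<close> therefore gives a seminorm, and the monotonicity of \<open>p\<close> on \<open>V\<^sub>s\<^sub>p\<close> is exactly
  what is needed both for the triangle inequality and for the mixed lattice property.\<close>

lemma partially_ordered_vs_refl: "partially_ordered_vs le \<Longrightarrow> le x x"
  and partially_ordered_vs_antisym: "partially_ordered_vs le \<Longrightarrow> le x y \<Longrightarrow> le y x \<Longrightarrow> x = y"
  and partially_ordered_vs_trans: "partially_ordered_vs le \<Longrightarrow> le x y \<Longrightarrow> le y z \<Longrightarrow> le x z"
  and partially_ordered_vs_add_right: "partially_ordered_vs le \<Longrightarrow> le x y \<Longrightarrow> le (x + z) (y + z)"
  and partially_ordered_vs_scaleR:
    "partially_ordered_vs le \<Longrightarrow> le x y \<Longrightarrow> 0 \<le> c \<Longrightarrow> le (c *\<^sub>R x) (c *\<^sub>R y)"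
  unfolding partially_ordered_vs_def by blast+

lemma partially_ordered_vs_add_mono:
  assumes "partially_ordered_vs le" "le a b" "le c d"
  shows "le (a + c) (b + d)"
proof -
  have "le (a + c) (b + c)" using assms(1,2) by (rule partially_ordered_vs_add_right)
  moreover have "le (c + b) (d + b)" using assms(1,3) by (rule partially_ordered_vs_add_right)
  ultimately show ?thesis
    using partially_ordered_vs_trans[OF assms(1)] by (simp add: add.commute)
qed

lemma partially_ordered_vs_uminus:
  assumes "partially_ordered_vs le" "le x y"
  shows "le (- y) (- x)"
  using partially_ordered_vs_add_right[OF assms, of "- x - y"] by simp

lemma is_least_wrt_unique:
  "partially_ordered_vs le \<Longrightarrow> is_least_wrt le S a \<Longrightarrow> is_least_wrt le S b \<Longrightarrow> a = b"
  unfolding is_least_wrt_def by (blast intro: partially_ordered_vs_antisym)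

locale mixed_lattice_space =
  fixes le sle :: "'a::real_vector \<Rightarrow> 'a \<Rightarrow> bool"
  assumes mixed_lattice: "mixed_lattice_vs le sle"
begin

lemma ordered_le: "partially_ordered_vs le"
  and ordered_sle: "partially_ordered_vs sle"
  and sle_imp_le: "sle x y \<Longrightarrow> le x y"
  using mixed_lattice unfolding mixed_lattice_vs_def by blast+

lemma upper_part_least: "is_least_wrt le {w. sle 0 w \<and> le x w} (upper_part le sle x)"
proof -
  obtain w where w: "is_least_wrt le {w. sle 0 w \<and> le x w} w"
    using mixed_lattice unfolding mixed_lattice_vs_def by blast
  then have "(THE w. is_least_wrt le {w. sle 0 w \<and> le x w} w) = w"
    using is_least_wrt_unique[OF ordered_le] by blast
  with w show ?thesis unfolding upper_part_def mixed_upper_def by simp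
qed

lemma upper_part_eqI: "is_least_wrt le {w. sle 0 w \<and> le x w} u \<Longrightarrow> upper_part le sle x = u"
  using is_least_wrt_unique[OF ordered_le upper_part_least] .

lemma upper_part_spos: "sle 0 (upper_part le sle x)"
  and upper_part_ge: "le x (upper_part le sle x)"
  and upper_part_le: "sle 0 w \<Longrightarrow> le x w \<Longrightarrow> le (upper_part le sle x) w"
  using upper_part_least[of x] unfolding is_least_wrt_def by auto

lemma upper_part_zero: "upper_part le sle 0 = 0"
  by (rule upper_part_eqI)
    (simp add: is_least_wrt_def partially_ordered_vs_refl[OF ordered_le]
      partially_ordered_vs_refl[OF ordered_sle])

lemma upper_part_scaleR:
  assumes "0 < c"
  shows "upper_part le sle (c *\<^sub>R x) = c *\<^sub>R upper_part le sle x"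
proof (rule upper_part_eqI, unfold is_least_wrt_def, intro conjI ballI CollectI)
  let ?u = "upper_part le sle x"
  show "sle 0 (c *\<^sub>R ?u)"
    using partially_ordered_vs_scaleR[OF ordered_sle upper_part_spos, of c] assms by simp
  show "le (c *\<^sub>R x) (c *\<^sub>R ?u)"
    using partially_ordered_vs_scaleR[OF ordered_le upper_part_ge, of c] assms by simp
  fix v assume "v \<in> {w. sle 0 w \<and> le (c *\<^sub>R x) w}"
  then have "sle 0 (v /\<^sub>R c)" "le x (v /\<^sub>R c)"
    using partially_ordered_vs_scaleR[OF ordered_sle, of 0 v "inverse c"]
      partially_ordered_vs_scaleR[OF ordered_le, of "c *\<^sub>R x" v "inverse c"] assms
    by auto
  then have "le ?u (v /\<^sub>R c)" by (rule upper_part_le)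
  then show "le (c *\<^sub>R ?u) v"
    using partially_ordered_vs_scaleR[OF ordered_le, of ?u "v /\<^sub>R c" c] assms by simp
qed

lemma upper_part_subadditive:
  "le (upper_part le sle (x + y)) (upper_part le sle x + upper_part le sle y)"
proof (rule upper_part_le)
  show "sle 0 (upper_part le sle x + upper_part le sle y)"
    using partially_ordered_vs_add_mono[OF ordered_sle upper_part_spos upper_part_spos] by simp
  show "le (x + y) (upper_part le sle x + upper_part le sle y)"
    by (rule partially_ordered_vs_add_mono[OF ordered_le upper_part_ge upper_part_ge])
qed

lemma sabs_eq: "sabs le sle x = upper_part le sle x + upper_part le sle (- x)"
  unfolding sabs_def lower_part_def upper_part_def ..

lemma sabs_spos: "sle 0 (sabs le sle x)"
  using partially_ordered_vs_add_mono[OF ordered_sle upper_part_spos upper_part_spos]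
  by (simp add: sabs_eq)

lemma sabs_scaleR: "sabs le sle (c *\<^sub>R x) = \<bar>c\<bar> *\<^sub>R sabs le sle x"
proof -
  consider "0 < c" | "c = 0" | "c < 0" by linarith
  then show ?thesis
  proof cases
    case 1
    then show ?thesis
      using upper_part_scaleR[OF 1, of x] upper_part_scaleR[OF 1, of "- x"]
      by (simp add: sabs_eq scaleR_add_right)
  next
    case 2
    then show ?thesis by (simp add: sabs_eq upper_part_zero)
  next
    case 3
    then have "0 < - c" by simp
    from upper_part_scaleR[OF this, of x] upper_part_scaleR[OF this, of "- x"] 3
    show ?thesis by (simp add: sabs_eq scaleR_add_right add.commute)
  qed
qed

lemma sabs_subadditive: "le (sabs le sle (x + y)) (sabs le sle x + sabs le sle y)"
  using partially_ordered_vs_add_mono[OF ordered_le upper_part_subadditive[of x y]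
      upper_part_subadditive[of "- x" "- y"]]
  by (simp add: sabs_eq algebra_simps)

lemma sabs_eq_0_imp:
  assumes "sabs le sle x = 0"
  shows "x = 0"
proof -
  let ?u = "upper_part le sle x"
  have neg: "upper_part le sle (- x) = - ?u"
    using assms by (simp add: sabs_eq eq_neg_iff_add_eq_0 add.commute)
  have "le ?u 0"
    using partially_ordered_vs_uminus[OF ordered_le sle_imp_le[OF upper_part_spos[of "- x"]]] neg
    by simp
  then have u0: "?u = 0"
    using partially_ordered_vs_antisym[OF ordered_le] sle_imp_le[OF upper_part_spos] by blast
  have "le x 0" using upper_part_ge[of x] u0 by simp
  moreover have "le 0 x"
    using partially_ordered_vs_uminus[OF ordered_le upper_part_ge[of "- x"]] neg u0 by simp
  ultimately show ?thesis by (rule partially_ordered_vs_antisym[OF ordered_le])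
qed

lemma mixed_lattice_seminorm_comp_sabs:
  assumes seminorm: "is_seminorm p" and monotone: "mixed_monotone le sle p"
  shows "mixed_lattice_seminorm le sle (\<lambda>x. p (sabs le sle x))"
proof -
  have p_mono: "le (sabs le sle x) z \<Longrightarrow> p (sabs le sle x) \<le> p z" for x z
    using monotone sabs_spos unfolding mixed_monotone_def by blast
  have "p (sabs le sle (x + y)) \<le> p (sabs le sle x) + p (sabs le sle y)" for x y
  proof -
    have "p (sabs le sle (x + y)) \<le> p (sabs le sle x + sabs le sle y)"
      by (rule p_mono[OF sabs_subadditive])
    also have "\<dots> \<le> p (sabs le sle x) + p (sabs le sle y)"
      using seminorm unfolding is_seminorm_def by blast
    finally show ?thesis .
  qed
  moreover have "p (sabs le sle (c *\<^sub>R x)) = \<bar>c\<bar> * p (sabs le sle x)" for x c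
    using seminorm unfolding is_seminorm_def by (simp add: sabs_scaleR)
  ultimately show ?thesis
    unfolding mixed_lattice_seminorm_def is_seminorm_def using p_mono by blast
qed

lemma mixed_lattice_norm_comp_sabs:
  assumes norm: "is_norm_fun p" and monotone: "mixed_monotone le sle p"
  shows "mixed_lattice_norm le sle (\<lambda>x. p (sabs le sle x))"
  using mixed_lattice_seminorm_comp_sabs[OF _ monotone] norm sabs_eq_0_imp
  unfolding mixed_lattice_norm_def mixed_lattice_seminorm_def is_norm_fun_def by blast

end

theorem proposition4p5:
  fixes le sle :: "'a::real_vector \<Rightarrow> 'a \<Rightarrow> bool" and p :: "'a \<Rightarrow> real"
  assumes "mixed_lattice_vs le sle"
  shows "(is_seminorm p \<and> mixed_monotone le sle p \<longrightarrow>
            mixed_lattice_seminorm le sle (\<lambda>x. p (sabs le sle x)))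
       \<and> (is_norm_fun p \<and> mixed_monotone le sle p \<longrightarrow>
            mixed_lattice_norm le sle (\<lambda>x. p (sabs le sle x)))"
proof -
  interpret mixed_lattice_space le sle by (fact mixed_lattice_space.intro[OF assms])
  show ?thesis
    using mixed_lattice_seminorm_comp_sabs mixed_lattice_norm_comp_sabs by blast
qed

end
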